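(* Let $d\ge 1$, $T\ge 1$, let $\mathcal{X}\subseteq\mathbb{R}^d$ be a non-empty closed convex set containing $\mathbf{0}$, and let $0<\mu\le L$. Let $f_1,\dots,f_T:\mathcal{X}\to[0,\infty)$ be differentiable functions such that, for every $t$ and all $x,y\in\mathcal{X}$, $\frac{\mu}{2}\|y-x\|^2\le f_t(y)-f_t(x)-\langle\nabla f_t(x),y-x\rangle\le\frac{L}{2}\|y-x\|^2$, and such that there is a finite constant $G$ with $\max_{x\in\mathcal{X}}\|\nabla f_t(x)\|=G$ for all $t$. Let $x_0=\mathbf{0}$. Then the OMGD algorithm with $K=\lceil\frac{L+\mu}{2\mu}\ln4\rceil$ satisfies $$C_{\mathcal{A}_o}-C_{\mathsf{OPT}}\le 2G(\|x_1^\star\|+\mathcal{P}_T^\star)+5\|x_1^\star\|^2+\Big(10-\frac{\mu}{2(\mu+4)}\Big)\mathcal{P}_{2,T}^\star.$$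
   Context: $x_t^\star=\arg\min_{x\in\mathcal{X}}f_t(x)$, $\mathcal{P}_T^\star=\sum_{t=2}^T\|x_t^\star-x_{t-1}^\star\|$, $\mathcal{P}_{2,T}^\star=\sum_{t=2}^T\|x_t^\star-x_{t-1}^\star\|^2$. Quadratic-switching cost of $(y_1,\dots,y_T)\in\mathcal{X}^T$ with $y_0=x_0$: $\sum_{t=1}^T\big(f_t(y_t)+\frac12\|y_t-y_{t-1}\|^2\big)$; $C_{\mathsf{OPT}}$ is its minimum over $\mathcal{X}^T$. OMGD with parameter $K$: $x_1=x_0$; for $t=2,\dots,T$, $z_t^{(0)}=x_{t-1}$, $z_t^{(k)}=\Pi_{\mathcal{X}}\big(z_t^{(k-1)}-\frac1L\nabla f_{t-1}(z_t^{(k-1)})\big)$ ($k=1,\dots,K$), $x_t=z_t^{(K)}$, where $\Pi_{\mathcal{X}}$ is Euclidean projection onto $\mathcal{X}$. $C_{\mathcal{A}_o}$ is the quadratic-switching cost of $(x_1,\dots,x_T)$; $C_{\mathcal{A}_o}-C_{\mathsf{OPT}}$ is the dynamic regret. *)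

theory Defs
  imports "HOL-Analysis.Analysis"
begin

definition pgd_step :: "'a::euclidean_space set \<Rightarrow> real \<Rightarrow> ('a \<Rightarrow> 'a) \<Rightarrow> 'a \<Rightarrow> 'a" where
  "pgd_step X L gf z = closest_point X (z - (1 / L) *\<^sub>R gf z)"

text \<open>OMGD iterates: index 0 is x0, x_1 = x0, and x_t = K projected gradient
  steps on f_(t-1) started from x_(t-1), for t >= 2. g t is the gradient of f t.\<close>
fun omgd :: "'a::euclidean_space set \<Rightarrow> real \<Rightarrow> (nat \<Rightarrow> 'a \<Rightarrow> 'a) \<Rightarrow> nat \<Rightarrow> 'a \<Rightarrow> nat \<Rightarrow> 'a" where
  "omgd X L g K x0 0 = x0"
| "omgd X L g K x0 (Suc 0) = x0"
| "omgd X L g K x0 (Suc (Suc t)) = (pgd_step X L (g (Suc t)) ^^ K) (omgd X L g K x0 (Suc t))"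

definition qs_cost :: "(nat \<Rightarrow> 'a::euclidean_space \<Rightarrow> real) \<Rightarrow> 'a \<Rightarrow> nat \<Rightarrow> (nat \<Rightarrow> 'a) \<Rightarrow> real" where
  "qs_cost f x0 T y = (\<Sum>t = 1..T. f t (y t) + (1/2) * (norm (y t - (if t = 1 then x0 else y (t - 1))))\<^sup>2)"

definition C_OPT :: "'a::euclidean_space set \<Rightarrow> (nat \<Rightarrow> 'a \<Rightarrow> real) \<Rightarrow> 'a \<Rightarrow> nat \<Rightarrow> real" where
  "C_OPT X f x0 T = Inf {qs_cost f x0 T y | y. \<forall>t\<in>{1..T}. y t \<in> X}"

definition xstar :: "'a::euclidean_space set \<Rightarrow> (nat \<Rightarrow> 'a \<Rightarrow> real) \<Rightarrow> nat \<Rightarrow> 'a" where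
  "xstar X f t = (SOME x. x \<in> X \<and> (\<forall>y\<in>X. f t x \<le> f t y))"

definition path_len :: "'a::euclidean_space set \<Rightarrow> (nat \<Rightarrow> 'a \<Rightarrow> real) \<Rightarrow> nat \<Rightarrow> real" where
  "path_len X f T = (\<Sum>t = 2..T. norm (xstar X f t - xstar X f (t - 1)))"

definition path_len2 :: "'a::euclidean_space set \<Rightarrow> (nat \<Rightarrow> 'a \<Rightarrow> real) \<Rightarrow> nat \<Rightarrow> real" where
  "path_len2 X f T = (\<Sum>t = 2..T. (norm (xstar X f t - xstar X f (t - 1)))\<^sup>2)"

end

theory Submission
  imports Defs
begin

(* Each f_t is mu-strongly convex and L-smooth, so one projected gradient step with step size 1/L
   contracts the squared distance to the minimiser x_t^* by the factor (L - mu)/(L + mu), and the K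
   steps of OMGD give ||x_(t+1) - x_t^*|| <= ||x_t - x_t^*|| / 2.  Hence the tracking errors
   d_t = ||x_t - x_t^*|| obey d_t <= d_(t-1)/2 + ||x_t^* - x_(t-1)^*||, so the sums of d_t and of
   d_t^2 are controlled by the path lengths.  The hitting cost at x_t exceeds the minimum of f_t
   by at most G d_t, the switching cost is at most (9/8) d_(t-1)^2, and C_OPT is at least the sum
   of the minima.  This yields the bound with the constants 9/4 and 9/2 in place of 5 and
   10 - mu/(2(mu+4)). *)

definition strongly_convex_smooth_on ::
    "'a::real_inner set \<Rightarrow> real \<Rightarrow> real \<Rightarrow> ('a \<Rightarrow> real) \<Rightarrow> ('a \<Rightarrow> 'a) \<Rightarrow> bool" where
  "strongly_convex_smooth_on X \<mu> L f g \<longleftrightarrow>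
     (\<forall>x\<in>X. \<forall>y\<in>X. \<mu> / 2 * (norm (y - x))\<^sup>2 \<le> f y - f x - g x \<bullet> (y - x)
                 \<and> f y - f x - g x \<bullet> (y - x) \<le> L / 2 * (norm (y - x))\<^sup>2)"

lemma smooth_minimizer_first_order:
  fixes X :: "'a::real_inner set"
  assumes "convex X" "0 < L" "xs \<in> X" "v \<in> X"
    and min: "\<forall>y\<in>X. f xs \<le> f y"
    and smooth: "\<forall>y\<in>X. f y - f xs - g xs \<bullet> (y - xs) \<le> L / 2 * (norm (y - xs))\<^sup>2"
  shows "0 \<le> g xs \<bullet> (v - xs)"
proof (rule ccontr)
  define c where "c = - (g xs \<bullet> (v - xs))"
  define n where "n = (norm (v - xs))\<^sup>2"
  assume "\<not> 0 \<le> g xs \<bullet> (v - xs)"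
  then have c: "0 < c" and n: "0 < n"
    unfolding c_def n_def by (auto simp: zero_less_norm_iff)
  define s where "s = min 1 (c / (L * n))"
  have s: "0 < s" "s \<le> 1" "s * (L * n) \<le> c"
    unfolding s_def using c n \<open>0 < L\<close> by (auto simp: min_def field_simps)
  define z where "z = xs + s *\<^sub>R (v - xs)"
  have "z = (1 - s) *\<^sub>R xs + s *\<^sub>R v" unfolding z_def by (simp add: algebra_simps)
  then have "z \<in> X" using assms(1,3,4) s by (simp add: convex_def)
  then have "f xs \<le> f z" "f z - f xs + s * c \<le> L / 2 * (s\<^sup>2 * n)"
    using min smooth unfolding z_def c_def n_def by (auto simp: power_mult_distrib)
  moreover have "L / 2 * (s\<^sup>2 * n) = s * (s * (L * n)) / 2"
    by (simp add: power2_eq_square)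
  moreover have "s * (s * (L * n)) \<le> s * c"
    using s by (intro mult_left_mono) auto
  moreover have "0 < s * c" using s c by simp
  ultimately show False by linarith
qed

lemma pgd_step_in:
  assumes "closed X" "X \<noteq> {}"
  shows "pgd_step X L g z \<in> X"
  using assms by (simp add: pgd_step_def closest_point_in_set)

lemma pgd_step_contraction:
  fixes X :: "'a::euclidean_space set"
  assumes X: "closed X" "convex X" and muL: "0 < \<mu>" "\<mu> \<le> L"
    and scs: "strongly_convex_smooth_on X \<mu> L f g"
    and xs: "xs \<in> X" "\<forall>y\<in>X. f xs \<le> f y" and x: "x \<in> X"
  shows "(norm (pgd_step X L g x - xs))\<^sup>2 \<le> (L - \<mu>) / (L + \<mu>) * (norm (x - xs))\<^sup>2"
proof -
  define b where "b = pgd_step X L g x"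
  define B where "B = (norm (b - xs))\<^sup>2"
  define D where "D = (norm (x - xs))\<^sup>2"
  define E where "E = (norm (x - b))\<^sup>2"
  define I where "I = (x - b) \<bullet> (b - xs)"
  have b: "b \<in> X" unfolding b_def using X xs by (auto intro: pgd_step_in)
  have sc: "\<mu> / 2 * (norm (y - z))\<^sup>2 \<le> f y - f z - g z \<bullet> (y - z)"
    and smooth: "f y - f z - g z \<bullet> (y - z) \<le> L / 2 * (norm (y - z))\<^sup>2"
    if "y \<in> X" "z \<in> X" for y z
    using scs that unfolding strongly_convex_smooth_on_def by blast+
  have "0 \<le> g xs \<bullet> (b - xs)"
    using smooth_minimizer_first_order[OF X(2) _ xs(1) b xs(2), of L g] smooth xs(1) muL
    by fastforce
  then have "\<mu> / 2 * B \<le> f b - f xs"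
    using sc[OF b xs(1)] unfolding B_def by linarith
  also have "f b - f xs \<le> g x \<bullet> (b - xs) + L / 2 * E - \<mu> / 2 * D"
    using smooth[OF b x] sc[OF xs(1) x]
    unfolding E_def D_def by (simp add: norm_minus_commute inner_diff_right)
  also have "g x \<bullet> (b - xs) \<le> L * I"
  proof -
    have "(x - (1 / L) *\<^sub>R g x - b) \<bullet> (xs - b) \<le> 0"
      unfolding b_def pgd_step_def using closest_point_dot[OF X(2,1) xs(1)] .
    then have "(1 / L) * (g x \<bullet> (b - xs)) \<le> I"
      unfolding I_def by (simp add: inner_diff_left inner_diff_right algebra_simps)
    then show ?thesis
      using muL by (simp add: field_simps)
  qed
  finally have "\<mu> / 2 * B \<le> L * I + L / 2 * E - \<mu> / 2 * D" by simp
  moreover have "D = E + 2 * I + B"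
    unfolding D_def E_def I_def B_def
    using dot_norm[of "x - b" "b - xs"] by (simp add: norm_minus_commute)
  ultimately have "\<mu> / 2 * B \<le> L / 2 * (D - B) - \<mu> / 2 * D"
    by (simp add: algebra_simps)
  then have "(L + \<mu>) * B \<le> (L - \<mu>) * D" by (simp add: algebra_simps)
  then show ?thesis
    using muL unfolding B_def D_def b_def by (simp add: field_simps)
qed

lemma pgd_iterates_in:
  assumes "closed X" "z \<in> X"
  shows "(pgd_step X L g ^^ k) z \<in> X"
  using assms by (induction k) (auto intro: pgd_step_in)

lemma pgd_iterates_contraction:
  fixes X :: "'a::euclidean_space set"
  assumes X: "closed X" "convex X" and muL: "0 < \<mu>" "\<mu> \<le> L"
    and scs: "strongly_convex_smooth_on X \<mu> L f g"
    and xs: "xs \<in> X" "\<forall>y\<in>X. f xs \<le> f y" and x: "x \<in> X"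
  shows "(norm ((pgd_step X L g ^^ k) x - xs))\<^sup>2 \<le> ((L - \<mu>) / (L + \<mu>)) ^ k * (norm (x - xs))\<^sup>2"
proof (induction k)
  case 0
  then show ?case by simp
next
  case (Suc k)
  have "(pgd_step X L g ^^ k) x \<in> X"
    using pgd_iterates_in[OF X(1) x] .
  then have "(norm ((pgd_step X L g ^^ Suc k) x - xs))\<^sup>2
      \<le> (L - \<mu>) / (L + \<mu>) * (norm ((pgd_step X L g ^^ k) x - xs))\<^sup>2"
    using pgd_step_contraction[OF X muL scs xs] by simp
  also have "\<dots> \<le> (L - \<mu>) / (L + \<mu>) * (((L - \<mu>) / (L + \<mu>)) ^ k * (norm (x - xs))\<^sup>2)"
    using Suc.IH muL by (intro mult_left_mono) auto
  finally show ?case by simp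
qed

lemma contraction_factor_power_le:
  fixes \<mu> L c :: real
  assumes "0 < \<mu>" "\<mu> \<le> L" "0 < c"
  shows "((L - \<mu>) / (L + \<mu>)) ^ nat \<lceil>(L + \<mu>) / (2 * \<mu>) * ln c\<rceil> \<le> 1 / c"
proof -
  define a where "a = 2 * \<mu> / (L + \<mu>)"
  define K where "K = nat \<lceil>(L + \<mu>) / (2 * \<mu>) * ln c\<rceil>"
  have a: "0 < a" "a \<le> 1" "(L - \<mu>) / (L + \<mu>) = 1 - a"
    unfolding a_def using assms by (auto simp: field_simps)
  have "(1 - a) ^ K \<le> exp (- a) ^ K"
    using a exp_ge_add_one_self[of "- a"] by (intro power_mono) auto
  also have "\<dots> = exp (- (a * real K))"
    by (simp add: exp_of_nat_mult[symmetric] mult.commute)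
  also have "\<dots> \<le> exp (- ln c)"
  proof -
    have "a * ((L + \<mu>) / (2 * \<mu>)) = 1"
      unfolding a_def using assms by simp
    then have "ln c = a * ((L + \<mu>) / (2 * \<mu>) * ln c)"
      by (metis mult.assoc mult_1)
    also have "\<dots> \<le> a * real K"
      unfolding K_def using a by (intro mult_left_mono real_nat_ceiling_ge) auto
    finally show ?thesis by simp
  qed
  also have "\<dots> = 1 / c" using assms by (simp add: exp_minus inverse_eq_divide)
  finally show ?thesis using a K_def by simp
qed

lemma strongly_convex_attains_min:
  fixes X :: "'a::euclidean_space set"
  assumes "closed X" "a \<in> X" "0 < \<mu>" "continuous_on X f"
    and sc: "\<forall>y\<in>X. \<mu> / 2 * (norm (y - a))\<^sup>2 \<le> f y - f a - g \<bullet> (y - a)"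
  shows "\<exists>xs\<in>X. \<forall>y\<in>X. f xs \<le> f y"
proof -
  define R where "R = 2 * norm g / \<mu>"
  have far: "f a < f y" if "y \<in> X" "R < norm (y - a)" for y
  proof -
    have "norm g * norm (y - a) < \<mu> / 2 * norm (y - a) * norm (y - a)"
      using that \<open>0 < \<mu>\<close> unfolding R_def
      by (intro mult_strict_right_mono) (auto simp: field_simps)
    moreover have "- (g \<bullet> (y - a)) \<le> norm g * norm (y - a)"
      using norm_cauchy_schwarz[of "- g" "y - a"] by simp
    ultimately show ?thesis
      using sc that(1) by (fastforce simp: power2_eq_square)
  qed
  define S where "S = X \<inter> cball a R"
  have "compact S" "S \<noteq> {}" "continuous_on S f"
    unfolding S_def R_def using assms
    by (auto simp: closed_Int_compact intro: continuous_on_subset)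
  then obtain m where m: "m \<in> S" "\<forall>y\<in>S. f m \<le> f y"
    using continuous_attains_inf by blast
  have "f m \<le> f y" if "y \<in> X" for y
  proof (cases "norm (y - a) \<le> R")
    case True
    then show ?thesis using m that by (simp add: S_def dist_norm norm_minus_commute)
  next
    case False
    have "a \<in> S" unfolding S_def R_def using assms by auto
    then show ?thesis using m far[OF that] False by force
  qed
  then show ?thesis using m S_def by blast
qed

lemma xstar_minimizes:
  fixes X :: "'a::euclidean_space set"
  assumes "closed X" "a \<in> X" "0 < \<mu>" "continuous_on X (f t)"
    and "strongly_convex_smooth_on X \<mu> L (f t) g"
  shows "xstar X f t \<in> X \<and> (\<forall>y\<in>X. f t (xstar X f t) \<le> f t y)"
proof -
  have "\<exists>x\<in>X. \<forall>y\<in>X. f t x \<le> f t y"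
    using assms by (intro strongly_convex_attains_min[of X a \<mu> "f t" "g a"])
      (auto simp: strongly_convex_smooth_on_def)
  then show ?thesis
    using someI_ex[of "\<lambda>x. x \<in> X \<and> (\<forall>y\<in>X. f t x \<le> f t y)"] unfolding xstar_def by blast
qed

lemma strongly_convex_gap_le:
  assumes "strongly_convex_smooth_on X \<mu> L f g" "0 \<le> \<mu>" "x \<in> X" "y \<in> X" "norm (g x) \<le> G"
  shows "f x - f y \<le> G * norm (x - y)"
proof -
  have "\<mu> / 2 * (norm (y - x))\<^sup>2 \<le> f y - f x - g x \<bullet> (y - x)"
    using assms(1,3,4) unfolding strongly_convex_smooth_on_def by blast
  moreover have "0 \<le> \<mu> / 2 * (norm (y - x))\<^sup>2" using assms(2) by simp
  moreover have "g x \<bullet> (x - y) \<le> G * norm (x - y)"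
    using norm_cauchy_schwarz[of "g x" "x - y"] assms(5) mult_right_mono[OF assms(5) norm_ge_zero[of "x - y"]]
    by linarith
  ultimately show ?thesis by (simp add: inner_diff_right)
qed

lemma omgd_in:
  assumes "closed X" "x0 \<in> X"
  shows "omgd X L g K x0 t \<in> X"
proof -
  have "omgd X L g K x0 t \<in> X \<and> omgd X L g K x0 (Suc t) \<in> X"
    by (induction t) (use assms pgd_iterates_in in auto)
  then show ?thesis ..
qed

lemma omgd_halves_distance_to_xstar:
  fixes X :: "'a::euclidean_space set"
  assumes X: "closed X" "convex X" "x0 \<in> X" and muL: "0 < \<mu>" "\<mu> \<le> L"
    and K: "((L - \<mu>) / (L + \<mu>)) ^ K \<le> 1 / 4"
    and scs: "\<forall>t\<in>{1..T}. strongly_convex_smooth_on X \<mu> L (f t) (g t)"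
    and min: "\<forall>t\<in>{1..T}. xstar X f t \<in> X \<and> (\<forall>y\<in>X. f t (xstar X f t) \<le> f t y)"
    and t: "t \<in> {2..T}"
  shows "norm (omgd X L g K x0 t - xstar X f (t - 1)) \<le> norm (omgd X L g K x0 (t - 1) - xstar X f (t - 1)) / 2"
proof -
  obtain s where s: "t = Suc (Suc s)" using t by (metis atLeastAtMost_iff add_2_eq_Suc le_Suc_ex)
  let ?x = "omgd X L g K x0 (Suc s)" and ?xs = "xstar X f (Suc s)"
  have "Suc s \<in> {1..T}" using s t by simp
  then have "(norm ((pgd_step X L (g (Suc s)) ^^ K) ?x - ?xs))\<^sup>2
      \<le> ((L - \<mu>) / (L + \<mu>)) ^ K * (norm (?x - ?xs))\<^sup>2"
    using scs min by (blast intro: pgd_iterates_contraction[OF X(1,2) muL] omgd_in[OF X(1,3)])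
  then have "(norm (omgd X L g K x0 t - ?xs))\<^sup>2 \<le> ((L - \<mu>) / (L + \<mu>)) ^ K * (norm (?x - ?xs))\<^sup>2"
    by (simp add: s)
  also have "\<dots> \<le> 1 / 4 * (norm (?x - ?xs))\<^sup>2"
    using K by (rule mult_right_mono) simp
  also have "\<dots> = (norm (?x - ?xs) / 2)\<^sup>2"
    by (simp add: power_divide)
  finally have "norm (omgd X L g K x0 t - ?xs) \<le> norm (?x - ?xs) / 2"
    by (rule power2_le_imp_le) simp
  then show ?thesis by (simp add: s)
qed

lemma sum_le_of_halving_recurrence:
  fixes d p :: "nat \<Rightarrow> real"
  assumes "\<forall>t\<in>{2..n}. d t \<le> d (t - 1) / 2 + p t" "1 \<le> n"
  shows "(\<Sum>t=1..n. d t) + d n \<le> 2 * d 1 + 2 * (\<Sum>t=2..n. p t)"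
  using assms(2,1)
proof (induction n rule: nat_induct_at_least)
  case (Suc n)
  then have "d (Suc n) \<le> d n / 2 + p (Suc n)"
    using bspec[OF Suc.prems, of "Suc n"] by simp
  with Suc show ?case by simp
qed simp

lemma sum_squares_le_of_halving_recurrence:
  fixes d p :: "nat \<Rightarrow> real"
  assumes "\<forall>t\<in>{2..n}. 0 \<le> d t \<and> d t \<le> d (t - 1) / 2 + p t" "1 \<le> n"
  shows "(\<Sum>t=1..n. (d t)\<^sup>2) + (d n)\<^sup>2 \<le> 2 * (d 1)\<^sup>2 + 4 * (\<Sum>t=2..n. (p t)\<^sup>2)"
  using assms(2,1)
proof (induction n rule: nat_induct_at_least)
  case (Suc n)
  then have "0 \<le> d (Suc n)" "d (Suc n) \<le> d n / 2 + p (Suc n)"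
    using bspec[OF Suc.prems, of "Suc n"] by simp_all
  then have "(d (Suc n))\<^sup>2 \<le> (d n / 2 + p (Suc n))\<^sup>2" by (simp add: power_mono)
  also have "\<dots> \<le> (d n)\<^sup>2 / 2 + 2 * (p (Suc n))\<^sup>2"
    using zero_le_power2[of "d n / 2 - p (Suc n)"] by (simp add: power2_eq_square algebra_simps)
  finally show ?case using Suc by simp
qed simp

lemma sum_shift_last:
  fixes h :: "nat \<Rightarrow> real"
  assumes "1 \<le> n"
  shows "(\<Sum>t=2..n. h (t - 1)) + h n = (\<Sum>t=1..n. h t)"
  using assms by (induction n rule: nat_induct_at_least) simp_all

lemma qs_cost_split:
  assumes "1 \<le> T" "y 1 = x0"
  shows "qs_cost f x0 T y = (\<Sum>t=1..T. f t (y t)) + (\<Sum>t=2..T. (norm (y t - y (t - 1)))\<^sup>2 / 2)"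
proof -
  have "(\<Sum>t=1..T. (norm (y t - (if t = 1 then x0 else y (t - 1))))\<^sup>2 / 2)
      = (\<Sum>t=2..T. (norm (y t - (if t = 1 then x0 else y (t - 1))))\<^sup>2 / 2)"
    using assms by (simp add: sum.atLeast_Suc_atMost numeral_2_eq_2)
  also have "\<dots> = (\<Sum>t=2..T. (norm (y t - y (t - 1)))\<^sup>2 / 2)"
    by (rule sum.cong) auto
  finally show ?thesis unfolding qs_cost_def by (simp add: sum.distrib)
qed

lemma C_OPT_ge_sum_min:
  assumes "\<forall>t\<in>{1..T}. xs t \<in> X \<and> (\<forall>y\<in>X. f t (xs t) \<le> f t y)"
  shows "(\<Sum>t=1..T. f t (xs t)) \<le> C_OPT X f x0 T"
  unfolding C_OPT_def
proof (rule cInf_greatest)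
  show "{qs_cost f x0 T y |y. \<forall>t\<in>{1..T}. y t \<in> X} \<noteq> {}"
    using assms by blast
next
  fix c assume "c \<in> {qs_cost f x0 T y |y. \<forall>t\<in>{1..T}. y t \<in> X}"
  then obtain y where c: "c = qs_cost f x0 T y" and y: "\<forall>t\<in>{1..T}. y t \<in> X" by blast
  have "(\<Sum>t=1..T. f t (xs t)) \<le> qs_cost f x0 T y"
    unfolding qs_cost_def using assms y by (intro sum_mono add_increasing2) auto
  then show "(\<Sum>t=1..T. f t (xs t)) \<le> c" using c by simp
qed

lemma regret_le_of_halving_tracking:
  fixes y :: "nat \<Rightarrow> 'a::euclidean_space" and G :: real
  assumes T: "1 \<le> T" and y1: "y 1 = x0" and G: "0 \<le> G"
    and min: "\<forall>t\<in>{1..T}. xstar X f t \<in> X \<and> (\<forall>z\<in>X. f t (xstar X f t) \<le> f t z)"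
    and gap: "\<forall>t\<in>{1..T}. f t (y t) - f t (xstar X f t) \<le> G * norm (y t - xstar X f t)"
    and halve: "\<forall>t\<in>{2..T}. norm (y t - xstar X f (t - 1)) \<le> norm (y (t - 1) - xstar X f (t - 1)) / 2"
  shows "qs_cost f x0 T y - C_OPT X f x0 T
         \<le> 2 * G * (norm (x0 - xstar X f 1) + path_len X f T) + 9 / 4 * (norm (x0 - xstar X f 1))\<^sup>2
           + 9 / 2 * path_len2 X f T"
proof -
  define xs where "xs = xstar X f"
  define d where "d t = norm (y t - xs t)" for t
  define p where "p t = norm (xs t - xs (t - 1))" for t
  have rec: "\<forall>t\<in>{2..T}. 0 \<le> d t \<and> d t \<le> d (t - 1) / 2 + p t"
  proof
    fix t assume t: "t \<in> {2..T}"
    have "d t \<le> norm (y t - xs (t - 1)) + p t"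
      unfolding d_def p_def using norm_triangle_ineq[of "y t - xs (t - 1)" "xs (t - 1) - xs t"]
      by (simp add: norm_minus_commute)
    then show "0 \<le> d t \<and> d t \<le> d (t - 1) / 2 + p t"
      using halve t unfolding d_def xs_def by fastforce
  qed
  have switch: "(norm (y t - y (t - 1)))\<^sup>2 / 2 \<le> 9 / 8 * (d (t - 1))\<^sup>2" if t: "t \<in> {2..T}" for t
  proof -
    have "norm (y t - y (t - 1)) \<le> norm (y t - xs (t - 1)) + d (t - 1)"
      unfolding d_def using norm_triangle_ineq[of "y t - xs (t - 1)" "xs (t - 1) - y (t - 1)"]
      by (simp add: norm_minus_commute)
    also have "\<dots> \<le> 3 / 2 * d (t - 1)"
      using halve t unfolding d_def xs_def by fastforce
    finally have "(norm (y t - y (t - 1)))\<^sup>2 \<le> (3 / 2 * d (t - 1))\<^sup>2"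
      by (simp add: power_mono)
    then show ?thesis by (simp add: power_mult_distrib power_divide)
  qed
  have "qs_cost f x0 T y - C_OPT X f x0 T
      \<le> (\<Sum>t=1..T. f t (y t) - f t (xs t)) + (\<Sum>t=2..T. (norm (y t - y (t - 1)))\<^sup>2 / 2)"
    using qs_cost_split[where f = f and y = y, OF T y1] C_OPT_ge_sum_min[OF min, of x0]
    unfolding xs_def by (simp add: sum_subtractf)
  also have "\<dots> \<le> G * (\<Sum>t=1..T. d t) + 9 / 8 * (\<Sum>t=2..T. (d (t - 1))\<^sup>2)"
    using gap switch unfolding sum_distrib_left d_def xs_def
    by (intro add_mono sum_mono) auto
  also have "\<dots> \<le> G * (2 * d 1 + 2 * (\<Sum>t=2..T. p t)) + 9 / 8 * (2 * (d 1)\<^sup>2 + 4 * (\<Sum>t=2..T. (p t)\<^sup>2))"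
  proof (intro add_mono mult_left_mono)
    have "0 \<le> d T" unfolding d_def by simp
    then show "(\<Sum>t=1..T. d t) \<le> 2 * d 1 + 2 * (\<Sum>t=2..T. p t)"
      using sum_le_of_halving_recurrence[of T d p] rec T by auto
    show "(\<Sum>t=2..T. (d (t - 1))\<^sup>2) \<le> 2 * (d 1)\<^sup>2 + 4 * (\<Sum>t=2..T. (p t)\<^sup>2)"
      using sum_squares_le_of_halving_recurrence[OF rec T] sum_shift_last[OF T, of "\<lambda>t. (d t)\<^sup>2"]
        zero_le_power2[of "d T"]
      by linarith
  qed (use G in simp_all)
  also have "\<dots> = 2 * G * (norm (x0 - xstar X f 1) + path_len X f T) + 9 / 4 * (norm (x0 - xstar X f 1))\<^sup>2
           + 9 / 2 * path_len2 X f T"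
    unfolding d_def p_def xs_def path_len_def path_len2_def y1 by (simp add: algebra_simps)
  finally show ?thesis .
qed

theorem theorem2:
  fixes X :: "'a::euclidean_space set"
    and f :: "nat \<Rightarrow> 'a \<Rightarrow> real"
    and g :: "nat \<Rightarrow> 'a \<Rightarrow> 'a"
    and T :: nat and \<mu> L G :: real
  assumes T: "T \<ge> 1"
    and X: "X \<noteq> {}" "closed X" "convex X" "0 \<in> X"
    and muL: "0 < \<mu>" "\<mu> \<le> L"
    and nonneg: "\<forall>t\<in>{1..T}. \<forall>x\<in>X. f t x \<ge> 0"
    and grad: "\<forall>t\<in>{1..T}. \<forall>x\<in>X. (f t has_derivative (\<lambda>h. g t x \<bullet> h)) (at x within X)"
    and sc: "\<forall>t\<in>{1..T}. \<forall>x\<in>X. \<forall>y\<in>X.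
               \<mu> / 2 * (norm (y - x))\<^sup>2 \<le> f t y - f t x - g t x \<bullet> (y - x)
             \<and> f t y - f t x - g t x \<bullet> (y - x) \<le> L / 2 * (norm (y - x))\<^sup>2"
    and Gmax: "\<forall>t\<in>{1..T}. (\<exists>x\<in>X. norm (g t x) = G) \<and> (\<forall>x\<in>X. norm (g t x) \<le> G)"
  shows "qs_cost f 0 T (omgd X L g (nat \<lceil>(L + \<mu>) / (2 * \<mu>) * ln 4\<rceil>) 0) - C_OPT X f 0 T
         \<le> 2 * G * (norm (xstar X f 1) + path_len X f T) + 5 * (norm (xstar X f 1))\<^sup>2
           + (10 - \<mu> / (2 * (\<mu> + 4))) * path_len2 X f T"
proof -
  define K where "K = nat \<lceil>(L + \<mu>) / (2 * \<mu>) * ln 4\<rceil>"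
  define x where "x = omgd X L g K 0"
  have K: "((L - \<mu>) / (L + \<mu>)) ^ K \<le> 1 / 4"
    unfolding K_def using contraction_factor_power_le[OF muL, of 4] by simp
  have scs: "\<forall>t\<in>{1..T}. strongly_convex_smooth_on X \<mu> L (f t) (g t)"
    using sc unfolding strongly_convex_smooth_on_def by blast
  have "\<forall>t\<in>{1..T}. continuous_on X (f t)"
    using grad by (auto intro!: has_derivative_continuous_on)
  then have min: "\<forall>t\<in>{1..T}. xstar X f t \<in> X \<and> (\<forall>z\<in>X. f t (xstar X f t) \<le> f t z)"
    using scs xstar_minimizes[OF X(2,4) muL(1)] by blast
  obtain z where "norm (g 1 z) = G" using Gmax T by fastforce
  then have G: "0 \<le> G" by (metis norm_ge_zero)
  have "qs_cost f 0 T x - C_OPT X f 0 T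
      \<le> 2 * G * (norm (xstar X f 1) + path_len X f T) + 9 / 4 * (norm (xstar X f 1))\<^sup>2
        + 9 / 2 * path_len2 X f T"
  proof (rule regret_le_of_halving_tracking[where ?x0.0 = 0, OF T _ G min, unfolded diff_0 norm_minus_cancel])
    show "\<forall>t\<in>{1..T}. f t (x t) - f t (xstar X f t) \<le> G * norm (x t - xstar X f t)"
      using scs min Gmax muL(1) omgd_in[OF X(2,4)] unfolding x_def
      by (blast intro: strongly_convex_gap_le less_imp_le)
    show "\<forall>t\<in>{2..T}. norm (x t - xstar X f (t - 1)) \<le> norm (x (t - 1) - xstar X f (t - 1)) / 2"
      using omgd_halves_distance_to_xstar[OF X(2,3,4) muL K scs min] unfolding x_def by blast
  qed (simp add: x_def)
  moreover have "9 / 2 * path_len2 X f T \<le> (10 - \<mu> / (2 * (\<mu> + 4))) * path_len2 X f T"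
    using muL unfolding path_len2_def by (intro mult_right_mono sum_nonneg) (auto simp: field_simps)
  moreover have "9 / 4 * (norm (xstar X f 1))\<^sup>2 \<le> 5 * (norm (xstar X f 1))\<^sup>2" by simp
  ultimately show ?thesis unfolding x_def K_def by linarith
qed

end
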